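(* The function $W$ defined below belongs to the class $\mathcal R(\mathcal J)$.
   Context: $\mathcal I=(\alpha,\infty)$, $-\infty\le\alpha<0$; $\mu,\sigma:\mathcal I\to\mathbb R$ Lipschitz, $\sigma>0$, $\alpha,+\infty$ natural boundaries of $dX_t=\mu(X_t)dt+\sigma(X_t)dB_t$; $r>0$; $\mathcal J=\{(x,m)\in[0,\infty)^2:x\ge m\}$. $f$ is a probability density on $\mathcal I$ with distribution function $F$, with $\bar y>0$ such that $f$ is Lipschitz and positive on $[0,\bar y]$ and vanishes outside. $U:[0,\infty)\to[0,\infty)$. Assumptions: (a) $\mu,\sigma$ $C^1$ with Lipschitz derivatives, $\mu(0)>rU(0)$, $\sup_{x\ge0}\mu'(x)<r$; (b) $U$ nondecreasing, concave, $C^2$ on $[0,\infty)$, for some $u^*\ge0$: $U'\ge1$ on $[0,u^*]$, $U'=1$ on $[u^*,\infty)$, $\mu U'+\frac12\sigma^2U''-rU>0$ on $[0,u^* )$; (c) $\mu$ twice differentiable, $\mu''\le0$ on $[0,\infty)$, $f/F$ decreasing on $[0,\bar y]$. Notation. $\overline x>0$: unique point with $\mu-rU>0$ on $[0,\overline x)$, $<0$ on $(\overline x,\infty)$. $\psi,\phi$: positive increasing/decreasing solutions of $\frac12\sigma^2u''+\mu u'-ru=0$. $D(x,m)=\psi'(x)\phi(m)-\phi'(x)\psi(m)$, $N(x,m)=\phi(x)\psi(m)-\psi(x)\phi(m)+D(x,m)\frac{\mu(x)}{r}-D(x,x)U(m)$, $E(x,m)=\frac{f(m)/F(m)}{1-\mu'(x)/r}\frac{N(x,m)}{D(x,m)}$;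 $\eta(m)$ unique solution $x$ of $N(x,m)=0$ ($m\in[0,\overline x]$), $x^0=\eta(0)$. $b:[0,\overline x]\to[0,\overline x]$ is the unique map with $b\in C([0,\overline x])\cap C^1((0,\overline x\wedge\bar y))$, $b(0)=x^0$, $b'(m)=E(b(m),m)$ on $(0,\overline x\wedge\bar y)$, $b\equiv b(\overline x\wedge\bar y)$ on $(\overline x\wedge\bar y,\overline x]$; $\overline m=\min\{m:b(m)=m\}\in(0,\overline x)$. Function $W$: with $A(m)=\frac{F(m)\phi''(b(m))}{\psi'(b(m))\phi''(b(m))-\phi'(b(m))\psi''(b(m))}$, $B(m)=-\frac{F(m)\psi''(b(m))}{\psi'(b(m))\phi''(b(m))-\phi'(b(m))\psi''(b(m))}$: $W(x,m)=A(m)\psi(x)+B(m)\phi(x)$ for $0\le m\le\overline m$, $m\le x\le b(m)$; $W(x,m)=(x-b(m))F(m)+\frac{\mu(b(m))}{r}F(m)$ for $0\le m\le\overline m$, $x>b(m)$; $W(x,m)=\frac{\mu(\overline m)}{r}F(\overline m)+(x-m)F(m)+\int_{\overline m}^m(U(s)f(s)+F(s))ds$ for $m>\overline m$, $x\ge m$. Class $\mathcal R(\mathcal J)$: continuous functions $w$ on $\mathcal J$ for which there is a finite sequence $0<m_1<\dots<m_k$ ($k\ge1$) with $w\in C^{2,1}(A_i)$ for $i=1,\dots,k+1$, where $A_1=\{(x,m)\in\mathcal J:0<m\le m_1\}$, $A_i=\{(x,m)\in\mathcal J:m_{i-1}\le m\le m_i\}$ ($2\le i\le k$), $A_{k+1}=\{(x,m)\in\mathcal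 J:m\ge m_k\}$; $w\in C^{2,1}(A)$ means there is a function on a neighbourhood of $A$ in $(0,\infty)^2$, twice continuously differentiable in $x$ and continuously differentiable in $m$, coinciding with $w$ on $A$. *)

theory Defs
  imports "HOL-Analysis.Analysis"
begin

definition state_space :: "ereal \<Rightarrow> real set" where
  "state_space \<alpha> = {x. \<alpha> < ereal x}"

text \<open>Scale density (normalised at the reference point 0) and speed density of
  \<open>dX = \<mu>(X) dt + \<sigma>(X) dB\<close>.\<close>
definition scale_dens :: "(real \<Rightarrow> real) \<Rightarrow> (real \<Rightarrow> real) \<Rightarrow> real \<Rightarrow> real" where
  "scale_dens \<mu> \<sigma> x = exp (- (LBINT y=0..x. 2 * \<mu> y / (\<sigma> y)\<^sup>2))"

definition speed_dens :: "(real \<Rightarrow> real) \<Rightarrow> (real \<Rightarrow> real) \<Rightarrow> real \<Rightarrow> real" where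
  "speed_dens \<mu> \<sigma> x = 2 / ((\<sigma> x)\<^sup>2 * scale_dens \<mu> \<sigma> x)"

text \<open>Feller's classification (Karlin--Taylor): a boundary is natural iff both
  \<open>\<Sigma>\<close> and \<open>N\<close> are infinite.  Left boundary \<open>\<alpha>\<close>:
  \<open>\<Sigma>(\<alpha>) = \<integral>_\<alpha>^0 (S(0)-S(\<xi>)) dM(\<xi>)\<close>, \<open>N(\<alpha>) = \<integral>_\<alpha>^0 (M(0)-M(\<xi>)) dS(\<xi>)\<close>.\<close>
definition natural_left :: "ereal \<Rightarrow> (real \<Rightarrow> real) \<Rightarrow> (real \<Rightarrow> real) \<Rightarrow> bool" where
  "natural_left \<alpha> \<mu> \<sigma> \<longleftrightarrow>
     (\<integral>\<^sup>+ \<xi>\<in>{x. \<alpha> < ereal x \<and> x < 0}.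
        (\<integral>\<^sup>+ \<eta>\<in>{\<xi>..0}. ennreal (scale_dens \<mu> \<sigma> \<eta>) \<partial>lborel) * ennreal (speed_dens \<mu> \<sigma> \<xi>) \<partial>lborel) = \<infinity>
   \<and> (\<integral>\<^sup>+ \<xi>\<in>{x. \<alpha> < ereal x \<and> x < 0}.
        (\<integral>\<^sup>+ \<eta>\<in>{\<xi>..0}. ennreal (speed_dens \<mu> \<sigma> \<eta>) \<partial>lborel) * ennreal (scale_dens \<mu> \<sigma> \<xi>) \<partial>lborel) = \<infinity>"

text \<open>Right boundary \<open>+\<infinity>\<close>:
  \<open>\<Sigma>(\<infinity>) = \<integral>_0^\<infinity> (S(\<xi>)-S(0)) dM(\<xi>)\<close>, \<open>N(\<infinity>) = \<integral>_0^\<infinity> (M(\<xi>)-M(0)) dS(\<xi>)\<close>.\<close>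
definition natural_right :: "(real \<Rightarrow> real) \<Rightarrow> (real \<Rightarrow> real) \<Rightarrow> bool" where
  "natural_right \<mu> \<sigma> \<longleftrightarrow>
     (\<integral>\<^sup>+ \<xi>\<in>{0<..}.
        (\<integral>\<^sup>+ \<eta>\<in>{0..\<xi>}. ennreal (scale_dens \<mu> \<sigma> \<eta>) \<partial>lborel) * ennreal (speed_dens \<mu> \<sigma> \<xi>) \<partial>lborel) = \<infinity>
   \<and> (\<integral>\<^sup>+ \<xi>\<in>{0<..}.
        (\<integral>\<^sup>+ \<eta>\<in>{0..\<xi>}. ennreal (speed_dens \<mu> \<sigma> \<eta>) \<partial>lborel) * ennreal (scale_dens \<mu> \<sigma> \<xi>) \<partial>lborel) = \<infinity>"

definition Dfun :: "(real \<Rightarrow> real) \<Rightarrow> (real \<Rightarrow> real) \<Rightarrow> real \<Rightarrow> real \<Rightarrow> real" where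
  "Dfun \<psi> \<phi> x m = deriv \<psi> x * \<phi> m - deriv \<phi> x * \<psi> m"

definition Nfun :: "(real \<Rightarrow> real) \<Rightarrow> (real \<Rightarrow> real) \<Rightarrow> (real \<Rightarrow> real) \<Rightarrow> real
    \<Rightarrow> (real \<Rightarrow> real) \<Rightarrow> real \<Rightarrow> real \<Rightarrow> real" where
  "Nfun \<psi> \<phi> \<mu> r U x m =
     \<phi> x * \<psi> m - \<psi> x * \<phi> m + Dfun \<psi> \<phi> x m * (\<mu> x / r) - Dfun \<psi> \<phi> x x * U m"

definition Efun :: "(real \<Rightarrow> real) \<Rightarrow> (real \<Rightarrow> real) \<Rightarrow> (real \<Rightarrow> real) \<Rightarrow> real
    \<Rightarrow> (real \<Rightarrow> real) \<Rightarrow> (real \<Rightarrow> real) \<Rightarrow> (real \<Rightarrow> real) \<Rightarrow> real \<Rightarrow> real \<Rightarrow> real" where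
  "Efun \<psi> \<phi> \<mu> r U f F x m =
     (f m / F m) / (1 - deriv \<mu> x / r) * (Nfun \<psi> \<phi> \<mu> r U x m / Dfun \<psi> \<phi> x m)"

definition Acoef :: "(real \<Rightarrow> real) \<Rightarrow> (real \<Rightarrow> real) \<Rightarrow> (real \<Rightarrow> real) \<Rightarrow> (real \<Rightarrow> real) \<Rightarrow> real \<Rightarrow> real" where
  "Acoef \<psi> \<phi> F b m =
     F m * deriv (deriv \<phi>) (b m) /
     (deriv \<psi> (b m) * deriv (deriv \<phi>) (b m) - deriv \<phi> (b m) * deriv (deriv \<psi>) (b m))"

definition Bcoef :: "(real \<Rightarrow> real) \<Rightarrow> (real \<Rightarrow> real) \<Rightarrow> (real \<Rightarrow> real) \<Rightarrow> (real \<Rightarrow> real) \<Rightarrow> real \<Rightarrow> real" where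
  "Bcoef \<psi> \<phi> F b m =
     - (F m * deriv (deriv \<psi>) (b m) /
     (deriv \<psi> (b m) * deriv (deriv \<phi>) (b m) - deriv \<phi> (b m) * deriv (deriv \<psi>) (b m)))"

text \<open>The candidate value function \<open>W\<close> (only its values on \<open>\<J>\<close> matter).\<close>
definition Wfun :: "(real \<Rightarrow> real) \<Rightarrow> (real \<Rightarrow> real) \<Rightarrow> (real \<Rightarrow> real) \<Rightarrow> real
    \<Rightarrow> (real \<Rightarrow> real) \<Rightarrow> (real \<Rightarrow> real) \<Rightarrow> (real \<Rightarrow> real) \<Rightarrow> (real \<Rightarrow> real) \<Rightarrow> real
    \<Rightarrow> real \<Rightarrow> real \<Rightarrow> real" where
  "Wfun \<psi> \<phi> \<mu> r U f F b mbar x m =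
     (if m \<le> mbar then
        (if x \<le> b m then Acoef \<psi> \<phi> F b m * \<psi> x + Bcoef \<psi> \<phi> F b m * \<phi> x
         else (x - b m) * F m + \<mu> (b m) / r * F m)
      else \<mu> mbar / r * F mbar + (x - m) * F m + (LBINT s=mbar..m. U s * f s + F s))"

definition Jset :: "(real \<times> real) set" where
  "Jset = {(x, m). 0 \<le> m \<and> m \<le> x}"

definition C21_open :: "(real \<times> real) set \<Rightarrow> (real \<Rightarrow> real \<Rightarrow> real) \<Rightarrow> bool" where
  "C21_open V g \<longleftrightarrow> (\<exists>gx gxx gm.
      continuous_on V (\<lambda>(x, m). g x m) \<and>
      continuous_on V (\<lambda>(x, m). gx x m) \<and>
      continuous_on V (\<lambda>(x, m). gxx x m) \<and>
      continuous_on V (\<lambda>(x, m). gm x m) \<and>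
      (\<forall>(x, m) \<in> V.
         ((\<lambda>y. g y m) has_real_derivative gx x m) (at x) \<and>
         ((\<lambda>y. gx y m) has_real_derivative gxx x m) (at x) \<and>
         ((\<lambda>n. g x n) has_real_derivative gm x m) (at m)))"

definition C21_on :: "(real \<times> real) set \<Rightarrow> (real \<Rightarrow> real \<Rightarrow> real) \<Rightarrow> bool" where
  "C21_on A w \<longleftrightarrow> (\<exists>V g. open V \<and> A \<subseteq> V \<and> V \<subseteq> {0<..} \<times> {0<..} \<and> C21_open V g \<and>
                        (\<forall>(x, m) \<in> A. g x m = w x m))"

text \<open>The pieces \<open>A_1, \<dots>, A_{k+1}\<close> determined by \<open>0 < m_1 < \<dots> < m_k\<close>
  (the list \<open>ms = [m_1, \<dots>, m_k]\<close>, indices shifted to start at 0).\<close>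
definition piece :: "real list \<Rightarrow> nat \<Rightarrow> (real \<times> real) set" where
  "piece ms i =
     (if i = 0 then {(x, m) \<in> Jset. 0 < m \<and> m \<le> ms ! 0}
      else if i < length ms then {(x, m) \<in> Jset. ms ! (i - 1) \<le> m \<and> m \<le> ms ! i}
      else {(x, m) \<in> Jset. ms ! (length ms - 1) \<le> m})"

definition class_R :: "(real \<Rightarrow> real \<Rightarrow> real) \<Rightarrow> bool" where
  "class_R w \<longleftrightarrow> continuous_on Jset (\<lambda>(x, m). w x m) \<and>
     (\<exists>ms. ms \<noteq> [] \<and> sorted_wrt (<) ms \<and> 0 < ms ! 0 \<and>
        (\<forall>i \<le> length ms. C21_on (piece ms i) w))"

end

theory Submission
  imports Defs
begin

text \<open>For \<open>m \<le> mbar\<close>, \<open>W(\<cdot>, m) = F(m) H(\<cdot>, b(m))\<close>, where \<open>H(\<cdot>, y)\<close> is the combination of \<open>\<psi>\<close>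
  and \<open>\<phi>\<close> that meets the line \<open>x \<mapsto> x - y + \<mu>(y)/r\<close> at \<open>x = y\<close> with equal value, slope and
  curvature (smooth fit). The ODE expresses the coefficients through \<open>\<psi>, \<psi>', \<phi>, \<phi>'\<close> only, so they
  are \<open>C\<^sup>1\<close> in \<open>y\<close> and \<open>H\<close> is \<open>C\<^sup>2\<^sup>,\<^sup>1\<close>. For \<open>m \<ge> mbar\<close>, \<open>W\<close> is affine in \<open>x\<close>
  with coefficients built from \<open>F\<close> and a primitive of \<open>U f + F\<close>. So \<open>W\<close> is \<open>C\<^sup>2\<^sup>,\<^sup>1\<close>
  wherever \<open>F\<close> and \<open>b\<close> are \<open>C\<^sup>1\<close>; this fails only at \<open>ybar\<close>, where \<open>f\<close> jumps to \<open>0\<close> and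
  \<open>b\<close> stops moving. The breakpoints are therefore \<open>mbar\<close> and \<open>ybar\<close>, and on the band ending
  at \<open>ybar\<close> one uses \<open>C\<^sup>1\<close> extensions of \<open>F\<close> (integrating the clamped density) and of \<open>b\<close>
  (its tangent line).\<close>

section \<open>Pasting derivatives and \<open>C\<^sup>2\<^sup>,\<^sup>1\<close> functions\<close>

lemma has_real_derivative_at_from_sides:
  fixes g :: "real \<Rightarrow> real"
  assumes "(g has_real_derivative D) (at a within {..a})"
    and "(g has_real_derivative D) (at a within {a..})"
  shows "(g has_real_derivative D) (at a)"
proof -
  have "(g has_real_derivative D) (at a within ({..a} \<union> {a..}))"
    using assms unfolding has_field_derivative_iff Lim_within_Un by blast
  moreover have "{..a} \<union> {a..} = (UNIV :: real set)" by auto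
  ultimately show ?thesis by simp
qed

lemma has_real_derivative_if_le:
  fixes p q :: "real \<Rightarrow> real"
  assumes p: "(p has_real_derivative p') (at x)" and q: "(q has_real_derivative q') (at x)"
    and paste: "x = a \<Longrightarrow> p a = q a \<and> p' = q'"
  shows "((\<lambda>t. if t \<le> a then p t else q t) has_real_derivative (if x \<le> a then p' else q')) (at x)"
proof (cases x a rule: linorder_cases)
  case less
  have "((\<lambda>t. if t \<le> a then p t else q t) has_real_derivative p') (at x)"
    by (rule has_field_derivative_transform_within_open[OF p, of "{..<a}"]) (use less in auto)
  with less show ?thesis by simp
next
  case greater
  have "((\<lambda>t. if t \<le> a then p t else q t) has_real_derivative q') (at x)"
    by (rule has_field_derivative_transform_within_open[OF q, of "{a<..}"]) (use greater in auto)
  with greater show ?thesis by simp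
next
  case equal
  have "((\<lambda>t. if t \<le> a then p t else q t) has_real_derivative p') (at a within {..a})"
    by (rule has_field_derivative_transform_within[of p _ _ _ 1])
       (use p equal in \<open>auto intro: has_field_derivative_at_within\<close>)
  moreover have "((\<lambda>t. if t \<le> a then p t else q t) has_real_derivative p') (at a within {a..})"
    by (rule has_field_derivative_transform_within[of q _ _ _ 1])
       (use q paste equal in \<open>auto intro: has_field_derivative_at_within\<close>)
  ultimately show ?thesis
    using equal by (simp add: has_real_derivative_at_from_sides)
qed

lemma continuous_on_if_fst_le_snd:
  fixes P Q :: "real \<times> real \<Rightarrow> real"
  assumes "continuous_on A P" "continuous_on A Q" "\<And>z. z \<in> A \<Longrightarrow> fst z = snd z \<Longrightarrow> P z = Q z"
  shows "continuous_on A (\<lambda>z. if fst z \<le> snd z then P z else Q z)"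
proof -
  have "continuous_on A (\<lambda>z. fst z - snd z)" by (intro continuous_intros)
  then have "continuous_on A (\<lambda>z. if fst z - snd z \<le> 0 then P z else Q z)"
    by (intro continuous_on_cases_le)
       (auto intro: continuous_on_subset[OF assms(1)] continuous_on_subset[OF assms(2)] assms(3))
  then show ?thesis by simp
qed

lemma C1_differentiable_onI_real:
  fixes f f' :: "real \<Rightarrow> real"
  assumes "\<And>x. x \<in> S \<Longrightarrow> (f has_real_derivative f' x) (at x)" and "continuous_on S f'"
  shows "f C1_differentiable_on S"
  using assms unfolding C1_differentiable_on_def has_real_derivative_iff_has_vector_derivative by blast

lemma
  fixes f :: "real \<Rightarrow> real"
  assumes "f C1_differentiable_on S"
  shows C1_differentiable_on_has_deriv: "x \<in> S \<Longrightarrow> (f has_real_derivative deriv f x) (at x)"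
    and C1_differentiable_on_continuous_deriv: "continuous_on S (deriv f)"
proof -
  obtain D where D: "\<And>x. x \<in> S \<Longrightarrow> (f has_real_derivative D x) (at x)" "continuous_on S D"
    using assms unfolding C1_differentiable_on_def has_real_derivative_iff_has_vector_derivative
    by blast
  then have "\<And>x. x \<in> S \<Longrightarrow> deriv f x = D x" by (simp add: DERIV_imp_deriv)
  then show "x \<in> S \<Longrightarrow> (f has_real_derivative deriv f x) (at x)" "continuous_on S (deriv f)"
    using D by (auto intro: continuous_on_cong[THEN iffD2])
qed

lemma C1_differentiable_on_continuous:
  "f C1_differentiable_on S \<Longrightarrow> continuous_on S f"
  by (simp add: C1_diff_imp_diff differentiable_imp_continuous_on)

lemma C1_differentiable_on_divide:
  fixes f g :: "real \<Rightarrow> real"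
  assumes f: "f C1_differentiable_on S" and g: "g C1_differentiable_on S"
    and nz: "\<And>x. x \<in> S \<Longrightarrow> g x \<noteq> 0"
  shows "(\<lambda>x. f x / g x) C1_differentiable_on S"
proof (rule C1_differentiable_onI_real)
  show "((\<lambda>x. f x / g x) has_real_derivative
      (deriv f x * g x - f x * deriv g x) / (g x * g x)) (at x)" if "x \<in> S" for x
    using that by (intro DERIV_divide C1_differentiable_on_has_deriv[OF f] C1_differentiable_on_has_deriv[OF g] nz)
  show "continuous_on S (\<lambda>x. (deriv f x * g x - f x * deriv g x) / (g x * g x))"
    using nz by (intro continuous_intros C1_differentiable_on_continuous_deriv[OF f]
        C1_differentiable_on_continuous_deriv[OF g] C1_differentiable_on_continuous[OF f]
        C1_differentiable_on_continuous[OF g]) auto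
qed

lemma has_real_derivative_left_at_endpoint:
  fixes g g' :: "real \<Rightarrow> real"
  assumes "a < c" and g_cont: "continuous_on {a..c} g"
    and g_deriv: "\<And>t. t \<in> {a<..<c} \<Longrightarrow> (g has_real_derivative g' t) (at t)"
    and g'_cont: "continuous_on {a<..c} g'"
  shows "(g has_real_derivative g' c) (at c within {..c})"
proof -
  define b where "b = (a + c) / 2"
  have b: "a < b" "b < c" using \<open>a < c\<close> by (simp_all add: b_def)
  \<comment> \<open>near \<open>c\<close>, \<open>g\<close> is a primitive of its derivative, which is continuous up to \<open>c\<close>\<close>
  have g_integral: "g t = g b + integral {b..t} g'" if "t \<in> {b..c}" for t
  proof -
    have "continuous_on {b..t} g"
      by (rule continuous_on_subset[OF g_cont]) (use that b in auto)
    moreover have "(g has_vector_derivative g' x) (at x)" if "x \<in> {b<..<t}" for x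
      unfolding has_real_derivative_iff_has_vector_derivative[symmetric]
      by (rule g_deriv) (use that \<open>t \<in> {b..c}\<close> b in auto)
    ultimately have "(g' has_integral (g t - g b)) {b..t}"
      using that by (intro fundamental_theorem_of_calculus_interior) auto
    then show ?thesis by (simp add: integral_unique)
  qed
  have "((\<lambda>t. integral {b..t} g') has_real_derivative g' c) (at c within {b..c})"
    using b by (intro integral_has_real_derivative continuous_on_subset[OF g'_cont]) auto
  then have "((\<lambda>t. g b + integral {b..t} g') has_real_derivative g' c) (at c within {b..c})"
    using DERIV_add[OF DERIV_const[of "g b"]] by simp
  then have "(g has_real_derivative g' c) (at c within {b..c})"
    by (rule has_field_derivative_transform_within[where d = "c - b"])
       (use b in \<open>auto simp: dist_real_def intro!: g_integral[symmetric]\<close>)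
  moreover have "at c within {b..c} = at c within {..c}"
    using b by (intro at_within_nhd[of _ "{b<..}"]) auto
  ultimately show ?thesis by simp
qed

lemma C1_differentiable_on_tangent_extension:
  fixes g g' :: "real \<Rightarrow> real"
  assumes "a < c" and g_cont: "continuous_on {a..c} g"
    and g_deriv: "\<And>t. t \<in> {a<..<c} \<Longrightarrow> (g has_real_derivative g' t) (at t)"
    and g'_cont: "continuous_on {a<..c} g'"
  shows "(\<lambda>t. if t \<le> c then g t else g c + g' c * (t - c)) C1_differentiable_on {a<..}"
    (is "?h C1_differentiable_on _")
proof (rule C1_differentiable_onI_real[where f' = "\<lambda>t. g' (min t c)"])
  show "continuous_on {a<..} (\<lambda>t. g' (min t c))"
    by (rule continuous_on_compose2[OF g'_cont]) (use \<open>a < c\<close> in \<open>auto intro!: continuous_intros\<close>)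
  have tangent: "((\<lambda>t. g c + g' c * (t - c)) has_real_derivative g' c) (at t)" for t
    by (auto intro!: derivative_eq_intros)
  fix t assume "t \<in> {a<..}"
  then consider "t < c" | "t = c" | "c < t" by fastforce
  then show "(?h has_real_derivative g' (min t c)) (at t)"
  proof cases
    case 1
    with \<open>t \<in> {a<..}\<close> have "(?h has_real_derivative g' t) (at t)"
      by (intro has_field_derivative_transform_within_open[OF g_deriv, where S = "{a<..<c}"]) auto
    with 1 show ?thesis by simp
  next
    case 2
    have "(?h has_real_derivative g' c) (at c within {..c})"
      by (rule has_field_derivative_transform_within[where d = 1,
            OF has_real_derivative_left_at_endpoint[OF assms]]) auto
    moreover have "(?h has_real_derivative g' c) (at c within {c..})"
      by (rule has_field_derivative_transform_within[where d = 1,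
            OF tangent[THEN has_field_derivative_at_within]]) auto
    ultimately show ?thesis using 2 by (simp add: has_real_derivative_at_from_sides)
  next
    case 3
    then have "(?h has_real_derivative g' c) (at t)"
      by (intro has_field_derivative_transform_within_open[OF tangent, where S = "{c<..}"]) auto
    with 3 show ?thesis by simp
  qed
qed

lemma C21_open_affine:
  fixes P Q :: "real \<Rightarrow> real"
  assumes P: "P C1_differentiable_on J" and Q: "Q C1_differentiable_on J"
  shows "C21_open (X \<times> J) (\<lambda>x m. x * P m + Q m)"
  unfolding C21_open_def
proof (intro exI conjI ballI)
  note cont_snd = continuous_on_compose2[OF _ continuous_on_snd[OF continuous_on_id], of J _ "X \<times> J"]
  show "continuous_on (X \<times> J) (\<lambda>(x, m). x * P m + Q m)"
    "continuous_on (X \<times> J) (\<lambda>(x, m). P m)"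
    "continuous_on (X \<times> J) (\<lambda>(x, m). 0::real)"
    "continuous_on (X \<times> J) (\<lambda>(x, m). x * deriv P m + deriv Q m)"
    unfolding case_prod_unfold
    by (intro continuous_intros cont_snd C1_differentiable_on_continuous[OF P]
        C1_differentiable_on_continuous[OF Q] C1_differentiable_on_continuous_deriv[OF P]
        C1_differentiable_on_continuous_deriv[OF Q]; force)+
  fix z assume "z \<in> X \<times> J"
  then obtain x m where z: "z = (x, m)" "m \<in> J" by auto
  have "((\<lambda>y. y * P m + Q m) has_real_derivative P m) (at x)"
    using DERIV_add[OF DERIV_cmult_right[OF DERIV_ident, of "P m"] DERIV_const] by simp
  moreover have "((\<lambda>n. x * P n + Q n) has_real_derivative x * deriv P m + deriv Q m) (at m)"
    by (intro DERIV_add DERIV_cmult C1_differentiable_on_has_deriv[OF P]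
        C1_differentiable_on_has_deriv[OF Q] z)
  ultimately show "case z of (x, m) \<Rightarrow>
      ((\<lambda>y. y * P m + Q m) has_real_derivative P m) (at x) \<and>
      ((\<lambda>y. P m) has_real_derivative 0) (at x) \<and>
      ((\<lambda>n. x * P n + Q n) has_real_derivative x * deriv P m + deriv Q m) (at m)"
    using z by simp
qed

lemma C21_open_scaled_compose:
  fixes a \<beta> :: "real \<Rightarrow> real" and G :: "real \<Rightarrow> real \<Rightarrow> real"
  assumes G: "C21_open T G" and a: "a C1_differentiable_on J" and \<beta>: "\<beta> C1_differentiable_on J"
    and into: "X \<times> \<beta> ` J \<subseteq> T"
  shows "C21_open (X \<times> J) (\<lambda>x m. a m * G x (\<beta> m))"
proof -
  obtain Gx Gxx Gm where
    cont: "continuous_on T (\<lambda>(x, m). G x m)" "continuous_on T (\<lambda>(x, m). Gx x m)"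
      "continuous_on T (\<lambda>(x, m). Gxx x m)" "continuous_on T (\<lambda>(x, m). Gm x m)" and
    der: "\<And>x m. (x, m) \<in> T \<Longrightarrow> ((\<lambda>y. G y m) has_real_derivative Gx x m) (at x) \<and>
      ((\<lambda>y. Gx y m) has_real_derivative Gxx x m) (at x) \<and>
      ((\<lambda>n. G x n) has_real_derivative Gm x m) (at m)"
    using G unfolding C21_open_def by blast
  have on_J: "continuous_on (X \<times> J) (\<lambda>z. h (snd z))" if "continuous_on J h" for h
    by (rule continuous_on_compose2[OF that continuous_on_snd[OF continuous_on_id]]) auto
  have lift: "continuous_on (X \<times> J) (\<lambda>z. H (fst z) (\<beta> (snd z)))"
    if "continuous_on T (\<lambda>(x, m). H x m)" for H
  proof -
    have "continuous_on (X \<times> J) (\<lambda>z. (fst z, \<beta> (snd z)))"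
      by (intro continuous_on_Pair continuous_on_fst continuous_on_id on_J
          C1_differentiable_on_continuous[OF \<beta>])
    then have "continuous_on (X \<times> J) (\<lambda>z. (\<lambda>(x, m). H x m) (fst z, \<beta> (snd z)))"
      by (rule continuous_on_compose2[OF that]) (use into in auto)
    then show ?thesis by simp
  qed
  note conts = lift[OF cont(1)] lift[OF cont(2)] lift[OF cont(3)] lift[OF cont(4)]
    on_J[OF C1_differentiable_on_continuous[OF a]] on_J[OF C1_differentiable_on_continuous_deriv[OF a]]
    on_J[OF C1_differentiable_on_continuous_deriv[OF \<beta>]]
  show ?thesis
    unfolding C21_open_def
  proof (intro exI conjI ballI)
    show "continuous_on (X \<times> J) (\<lambda>(x, m). a m * G x (\<beta> m))"
      "continuous_on (X \<times> J) (\<lambda>(x, m). a m * Gx x (\<beta> m))"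
      "continuous_on (X \<times> J) (\<lambda>(x, m). a m * Gxx x (\<beta> m))"
      "continuous_on (X \<times> J) (\<lambda>(x, m). deriv a m * G x (\<beta> m) + a m * (Gm x (\<beta> m) * deriv \<beta> m))"
      unfolding case_prod_unfold by (intro continuous_on_add continuous_on_mult conts)+
    fix z assume "z \<in> X \<times> J"
    then obtain x m where z: "z = (x, m)" "x \<in> X" "m \<in> J" by auto
    then have T: "(x, \<beta> m) \<in> T" using into by auto
    note der_G = der[OF T]
    have "((\<lambda>n. a n * G x (\<beta> n)) has_real_derivative
        deriv a m * G x (\<beta> m) + a m * (Gm x (\<beta> m) * deriv \<beta> m)) (at m)"
      using DERIV_mult[OF C1_differentiable_on_has_deriv[OF a z(3)]
          DERIV_chain2[OF der_G[THEN conjunct2, THEN conjunct2] C1_differentiable_on_has_deriv[OF \<beta> z(3)]]]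
      by (simp add: algebra_simps)
    with der_G show "case z of (x, m) \<Rightarrow>
        ((\<lambda>y. a m * G y (\<beta> m)) has_real_derivative a m * Gx x (\<beta> m)) (at x) \<and>
        ((\<lambda>y. a m * Gx y (\<beta> m)) has_real_derivative a m * Gxx x (\<beta> m)) (at x) \<and>
        ((\<lambda>n. a n * G x (\<beta> n)) has_real_derivative
          deriv a m * G x (\<beta> m) + a m * (Gm x (\<beta> m) * deriv \<beta> m)) (at m)"
      unfolding z(1) by (simp add: DERIV_cmult)
  qed
qed

lemma C21_onI:
  assumes "open J" "J \<subseteq> {0<..}" "C21_open ({0<..} \<times> J) g" "A \<subseteq> {0<..} \<times> J"
    and "\<And>x m. (x, m) \<in> A \<Longrightarrow> w x m = g x m"
  shows "C21_on A w"
  unfolding C21_on_def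
  using assms by (intro exI[of _ "{0<..} \<times> J"] exI[of _ g]) (auto intro: open_Times)

lemma C21_on_imp_continuous_on:
  assumes "C21_on A w"
  shows "continuous_on A (\<lambda>(x, m). w x m)"
proof -
  obtain V g where V: "A \<subseteq> V" "C21_open V g" "\<forall>(x, m)\<in>A. g x m = w x m"
    using assms unfolding C21_on_def by blast
  then have "continuous_on A (\<lambda>(x, m). g x m)"
    unfolding C21_open_def by (blast intro: continuous_on_subset)
  then show ?thesis
    by (rule continuous_on_cong[THEN iffD1, rotated 2]) (use V(3) in auto)
qed

lemma closed_Jset_band: "closed {(x, m) \<in> Jset. lo \<le> m \<and> m \<le> hi}"
proof -
  have "{(x, m) \<in> Jset. lo \<le> m \<and> m \<le> hi} =
      {z. 0 \<le> snd z} \<inter> {z. snd z \<le> fst z} \<inter> {z. lo \<le> snd z} \<inter> {z. snd z \<le> hi}"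
    by (auto simp: Jset_def)
  also have "closed \<dots>" by (intro closed_Int closed_Collect_le continuous_intros)
  finally show ?thesis .
qed

lemma closed_Jset_above: "closed {(x, m) \<in> Jset. lo \<le> m}"
proof -
  have "{(x, m) \<in> Jset. lo \<le> m} = {z. 0 \<le> snd z} \<inter> {z. snd z \<le> fst z} \<inter> {z. lo \<le> snd z}"
    by (auto simp: Jset_def)
  also have "closed \<dots>" by (intro closed_Int closed_Collect_le continuous_intros)
  finally show ?thesis .
qed

lemma class_RI_one_breakpoint:
  assumes "continuous_on Jset (\<lambda>(x, m). w x m)" "0 < a"
    "C21_on {(x, m) \<in> Jset. 0 < m \<and> m \<le> a} w" "C21_on {(x, m) \<in> Jset. a \<le> m} w"
  shows "class_R w"
  unfolding class_R_def
proof (intro conjI exI[of _ "[a]"] allI impI)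
  fix i assume "i \<le> length [a]"
  then have "i = 0 \<or> i = 1" by auto
  then show "C21_on (piece [a] i) w" using assms by (auto simp: piece_def)
qed (use assms in auto)

lemma class_RI_two_breakpoints:
  assumes "continuous_on Jset (\<lambda>(x, m). w x m)" "0 < a" "a < c"
    "C21_on {(x, m) \<in> Jset. 0 < m \<and> m \<le> a} w" "C21_on {(x, m) \<in> Jset. a \<le> m \<and> m \<le> c} w"
    "C21_on {(x, m) \<in> Jset. c \<le> m} w"
  shows "class_R w"
  unfolding class_R_def
proof (intro conjI exI[of _ "[a, c]"] allI impI)
  fix i assume "i \<le> length [a, c]"
  then have "i = 0 \<or> i = 1 \<or> i = 2" by auto
  then show "C21_on (piece [a, c] i) w" using assms by (auto simp: piece_def)
qed (use assms in auto)

lemma open_state_space: "\<alpha> < \<infinity> \<Longrightarrow> open (state_space \<alpha>)"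
  by (cases \<alpha>) (auto simp: state_space_def greaterThan_def[symmetric])

lemma nonneg_in_state_space: "\<alpha> < 0 \<Longrightarrow> 0 \<le> x \<Longrightarrow> x \<in> state_space \<alpha>"
  unfolding state_space_def by (metis mem_Collect_eq order_less_le_trans zero_ereal_def ereal_less_eq(3))

section \<open>Smooth fit with the fundamental solutions\<close>

locale fundamental_pair =
  fixes S :: "real set" and \<mu> \<sigma> \<psi> \<phi> :: "real \<Rightarrow> real" and r :: real
  assumes open_S: "open S"
    and r_pos: "r > 0"
    and sigma_pos: "\<And>x. x \<in> S \<Longrightarrow> \<sigma> x > 0"
    and sigma_cont: "continuous_on S \<sigma>"
    and mu_C1: "\<mu> C1_differentiable_on S"
    and psi_C2: "\<And>x. x \<in> S \<Longrightarrow> \<psi> differentiable (at x) \<and> deriv \<psi> differentiable (at x)"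
    and phi_C2: "\<And>x. x \<in> S \<Longrightarrow> \<phi> differentiable (at x) \<and> deriv \<phi> differentiable (at x)"
    and psi_ode: "\<And>x. x \<in> S \<Longrightarrow>
      1/2 * (\<sigma> x)\<^sup>2 * deriv (deriv \<psi>) x + \<mu> x * deriv \<psi> x - r * \<psi> x = 0"
    and phi_ode: "\<And>x. x \<in> S \<Longrightarrow>
      1/2 * (\<sigma> x)\<^sup>2 * deriv (deriv \<phi>) x + \<mu> x * deriv \<phi> x - r * \<phi> x = 0"
    and psi_pos: "\<And>x. x \<in> S \<Longrightarrow> \<psi> x > 0"
    and phi_pos: "\<And>x. x \<in> S \<Longrightarrow> \<phi> x > 0"
    and psi_incr: "strict_mono_on S \<psi>"
    and phi_decr: "strict_antimono_on S \<phi>"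
begin

lemma deriv2_eq_ode:
  assumes "x \<in> S" and "1/2 * (\<sigma> x)\<^sup>2 * deriv (deriv u) x + \<mu> x * deriv u x - r * u x = 0"
  shows "deriv (deriv u) x = 2 * (r * u x - \<mu> x * deriv u x) / (\<sigma> x)\<^sup>2"
  using assms sigma_pos[of x] by (auto simp: field_simps)

lemma ode_solution_C2:
  assumes C2: "\<And>x. x \<in> S \<Longrightarrow> u differentiable (at x) \<and> deriv u differentiable (at x)"
    and ode: "\<And>x. x \<in> S \<Longrightarrow> 1/2 * (\<sigma> x)\<^sup>2 * deriv (deriv u) x + \<mu> x * deriv u x - r * u x = 0"
  shows "u C1_differentiable_on S" and "deriv u C1_differentiable_on S"
proof -
  have du: "(u has_real_derivative deriv u x) (at x)" "(deriv u has_real_derivative deriv (deriv u) x) (at x)"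
    if "x \<in> S" for x
    using C2[OF that] by (simp_all add: DERIV_deriv_iff_real_differentiable)
  have cont_u: "continuous_on S u" "continuous_on S (deriv u)"
    using du by (meson DERIV_isCont continuous_at_imp_continuous_on)+
  then show "u C1_differentiable_on S" by (intro C1_differentiable_onI_real[of S u "deriv u"] du)
  have "continuous_on S (\<lambda>x. 2 * (r * u x - \<mu> x * deriv u x) / (\<sigma> x)\<^sup>2)"
    using sigma_pos
    by (intro continuous_intros cont_u sigma_cont C1_differentiable_on_continuous mu_C1)
       (fastforce dest: sigma_pos)
  moreover have "deriv (deriv u) x = 2 * (r * u x - \<mu> x * deriv u x) / (\<sigma> x)\<^sup>2" if "x \<in> S" for x
    using deriv2_eq_ode[OF that ode[OF that]] .
  ultimately have "continuous_on S (deriv (deriv u))"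
    by (simp add: continuous_on_eq)
  then show "deriv u C1_differentiable_on S"
    by (intro C1_differentiable_onI_real[of S "deriv u" "deriv (deriv u)"] du)
qed

lemma psi_C1: "\<psi> C1_differentiable_on S" "deriv \<psi> C1_differentiable_on S"
  by (intro ode_solution_C2 psi_C2 psi_ode; assumption)+

lemma phi_C1: "\<phi> C1_differentiable_on S" "deriv \<phi> C1_differentiable_on S"
  by (intro ode_solution_C2 phi_C2 phi_ode; assumption)+

lemmas psi_deriv = C1_differentiable_on_has_deriv[OF psi_C1(1)]
lemmas psi_deriv2 = C1_differentiable_on_has_deriv[OF psi_C1(2)]
lemmas phi_deriv = C1_differentiable_on_has_deriv[OF phi_C1(1)]
lemmas phi_deriv2 = C1_differentiable_on_has_deriv[OF phi_C1(2)]

lemma psi_deriv2_eq: "x \<in> S \<Longrightarrow> deriv (deriv \<psi>) x = 2 * (r * \<psi> x - \<mu> x * deriv \<psi> x) / (\<sigma> x)\<^sup>2"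
  by (intro deriv2_eq_ode psi_ode)

lemma phi_deriv2_eq: "x \<in> S \<Longrightarrow> deriv (deriv \<phi>) x = 2 * (r * \<phi> x - \<mu> x * deriv \<phi> x) / (\<sigma> x)\<^sup>2"
  by (intro deriv2_eq_ode phi_ode)

lemma deriv_psi_nonneg: "x \<in> S \<Longrightarrow> deriv \<psi> x \<ge> 0"
  using open_S by (intro mono_on_imp_deriv_nonneg[OF strict_mono_on_imp_mono_on[OF psi_incr] psi_deriv])
    (auto simp: interior_open)

lemma deriv_phi_neg:
  assumes x: "x \<in> S"
  shows "deriv \<phi> x < 0"
proof -
  have nonpos: "deriv \<phi> y \<le> 0" if "y \<in> S" for y
  proof -
    have mono: "mono_on S (\<lambda>x. - \<phi> x)"
    proof (rule mono_onI)
      fix x y assume "x \<in> S" "y \<in> S" "x \<le> y"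
      then show "- \<phi> x \<le> - \<phi> y" using monotone_onD[OF phi_decr, of x y] by (cases "x = y") auto
    qed
    have "- deriv \<phi> y \<ge> 0"
      by (rule mono_on_imp_deriv_nonneg[OF mono DERIV_minus[OF phi_deriv[OF that]]])
         (simp add: interior_open open_S that)
    then show ?thesis by simp
  qed
  show ?thesis
  proof (rule ccontr)
    assume "\<not> deriv \<phi> x < 0"
    then have zero: "deriv \<phi> x = 0" using nonpos[OF x] by simp
    obtain d where d: "d > 0" "ball x d \<subseteq> S" using open_S x by (auto simp: open_contains_ball)
    \<comment> \<open>a critical point of the nonpositive function \<open>\<phi>'\<close> is a local maximum, but \<open>\<phi>'' > 0\<close> there\<close>
    have "deriv (deriv \<phi>) x = 0"
      by (rule DERIV_local_max[OF phi_deriv2[OF x] d(1)])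
         (use d(2) nonpos zero in \<open>auto simp: dist_real_def\<close>)
    moreover have "deriv (deriv \<phi>) x > 0"
      using phi_deriv2_eq[OF x] zero phi_pos[OF x] r_pos sigma_pos[OF x] by simp
    ultimately show False by simp
  qed
qed

lemma Dfun_pos:
  assumes "x \<in> S" "m \<in> S"
  shows "Dfun \<psi> \<phi> x m > 0"
proof -
  have "deriv \<psi> x * \<phi> m \<ge> 0" using deriv_psi_nonneg[OF assms(1)] phi_pos[OF assms(2)] by simp
  moreover have "deriv \<phi> x * \<psi> m < 0" using deriv_phi_neg psi_pos assms by (simp add: mult_neg_pos)
  ultimately show ?thesis unfolding Dfun_def by linarith
qed

text \<open>Cramer's rule for \<open>c\<^sub>1 \<psi>' + c\<^sub>2 \<phi>' = 1\<close>, \<open>c\<^sub>1 \<psi>'' + c\<^sub>2 \<phi>'' = 0\<close> at the point \<open>y\<close>, with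
  \<open>\<psi>''\<close> and \<open>\<phi>''\<close> eliminated through the ODE so that the coefficients are \<open>C\<^sup>1\<close> in \<open>y\<close>.\<close>
definition psi_coeff :: "real \<Rightarrow> real" where
  "psi_coeff y = (r * \<phi> y - \<mu> y * deriv \<phi> y) / (r * Dfun \<psi> \<phi> y y)"

definition phi_coeff :: "real \<Rightarrow> real" where
  "phi_coeff y = (\<mu> y * deriv \<psi> y - r * \<psi> y) / (r * Dfun \<psi> \<phi> y y)"

lemma psi_coeff_C1: "psi_coeff C1_differentiable_on S"
  and phi_coeff_C1: "phi_coeff C1_differentiable_on S"
  unfolding psi_coeff_def[abs_def] phi_coeff_def[abs_def] Dfun_def
  using Dfun_pos[unfolded Dfun_def] r_pos
  by (intro C1_differentiable_on_divide C1_differentiable_on_diff C1_differentiable_on_mult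
      C1_differentiable_on_const psi_C1 phi_C1 mu_C1; force)+

lemma smooth_fit_value: "y \<in> S \<Longrightarrow> psi_coeff y * \<psi> y + phi_coeff y * \<phi> y = \<mu> y / r"
  using Dfun_pos[of y y] r_pos unfolding psi_coeff_def phi_coeff_def
  by (simp add: field_simps) (simp add: Dfun_def algebra_simps)

lemma smooth_fit_slope: "y \<in> S \<Longrightarrow> psi_coeff y * deriv \<psi> y + phi_coeff y * deriv \<phi> y = 1"
  using Dfun_pos[of y y] r_pos unfolding psi_coeff_def phi_coeff_def
  by (simp add: field_simps) (simp add: Dfun_def algebra_simps)

lemma smooth_fit_curvature:
  "y \<in> S \<Longrightarrow> psi_coeff y * deriv (deriv \<psi>) y + phi_coeff y * deriv (deriv \<phi>) y = 0"
  using Dfun_pos[of y y] r_pos sigma_pos[of y] unfolding psi_coeff_def phi_coeff_def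
  by (simp add: psi_deriv2_eq phi_deriv2_eq field_simps)

lemma smooth_fit_value_deriv:
  assumes y: "y \<in> S"
  shows "deriv psi_coeff y * \<psi> y + deriv phi_coeff y * \<phi> y = deriv \<mu> y / r - 1"
proof -
  have "((\<lambda>y. psi_coeff y * \<psi> y + phi_coeff y * \<phi> y) has_real_derivative
      deriv psi_coeff y * \<psi> y + deriv \<psi> y * psi_coeff y
      + (deriv phi_coeff y * \<phi> y + deriv \<phi> y * phi_coeff y)) (at y)"
    by (intro DERIV_add DERIV_mult C1_differentiable_on_has_deriv[OF psi_coeff_C1]
        C1_differentiable_on_has_deriv[OF phi_coeff_C1] psi_deriv phi_deriv y)
  moreover have "((\<lambda>y. psi_coeff y * \<psi> y + phi_coeff y * \<phi> y) has_real_derivative deriv \<mu> y / r) (at y)"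
    by (rule has_field_derivative_transform_within_open[OF _ open_S y, of "\<lambda>y. \<mu> y / r"])
       (auto intro: DERIV_cdivide C1_differentiable_on_has_deriv[OF mu_C1] y simp: smooth_fit_value)
  ultimately have "deriv psi_coeff y * \<psi> y + deriv \<psi> y * psi_coeff y
      + (deriv phi_coeff y * \<phi> y + deriv \<phi> y * phi_coeff y) = deriv \<mu> y / r"
    by (rule DERIV_unique)
  then show ?thesis
    using smooth_fit_slope[OF y] by (simp add: algebra_simps)
qed

lemma Cramer_denominator:
  assumes y: "y \<in> S"
  shows "deriv \<psi> y * deriv (deriv \<phi>) y - deriv \<phi> y * deriv (deriv \<psi>) y
    = 2 * r * Dfun \<psi> \<phi> y y / (\<sigma> y)\<^sup>2"
  using sigma_pos[OF y] unfolding psi_deriv2_eq[OF y] phi_deriv2_eq[OF y] Dfun_def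
  by (simp add: field_simps)

lemma psi_coeff_Cramer:
  assumes y: "y \<in> S"
  shows "deriv (deriv \<phi>) y /
    (deriv \<psi> y * deriv (deriv \<phi>) y - deriv \<phi> y * deriv (deriv \<psi>) y) = psi_coeff y"
  using Dfun_pos[OF y y] sigma_pos[OF y] r_pos
  unfolding Cramer_denominator[OF y] unfolding phi_deriv2_eq[OF y] psi_coeff_def by (simp add: field_simps)

lemma phi_coeff_Cramer:
  assumes y: "y \<in> S"
  shows "deriv (deriv \<psi>) y /
    (deriv \<psi> y * deriv (deriv \<phi>) y - deriv \<phi> y * deriv (deriv \<psi>) y) = - phi_coeff y"
  using Dfun_pos[OF y y] sigma_pos[OF y] r_pos
  unfolding Cramer_denominator[OF y] unfolding psi_deriv2_eq[OF y] phi_coeff_def by (simp add: field_simps)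

definition threshold_value :: "real \<Rightarrow> real \<Rightarrow> real" where
  "threshold_value x y =
    (if x \<le> y then psi_coeff y * \<psi> x + phi_coeff y * \<phi> x else x - y + \<mu> y / r)"

lemma threshold_value_above: "y \<in> S \<Longrightarrow> y \<le> x \<Longrightarrow> threshold_value x y = x - y + \<mu> y / r"
  using smooth_fit_value by (auto simp: threshold_value_def)

definition threshold_value_dx :: "real \<Rightarrow> real \<Rightarrow> real" where
  "threshold_value_dx x y =
    (if x \<le> y then psi_coeff y * deriv \<psi> x + phi_coeff y * deriv \<phi> x else 1)"

definition threshold_value_dxx :: "real \<Rightarrow> real \<Rightarrow> real" where
  "threshold_value_dxx x y =
    (if x \<le> y then psi_coeff y * deriv (deriv \<psi>) x + phi_coeff y * deriv (deriv \<phi>) x else 0)"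

definition threshold_value_dy :: "real \<Rightarrow> real \<Rightarrow> real" where
  "threshold_value_dy x y =
    (if x \<le> y then deriv psi_coeff y * \<psi> x + deriv phi_coeff y * \<phi> x else deriv \<mu> y / r - 1)"

lemma continuous_on_threshold_value:
  shows "continuous_on (S \<times> S) (\<lambda>(x, y). threshold_value x y)"
    and "continuous_on (S \<times> S) (\<lambda>(x, y). threshold_value_dx x y)"
    and "continuous_on (S \<times> S) (\<lambda>(x, y). threshold_value_dxx x y)"
    and "continuous_on (S \<times> S) (\<lambda>(x, y). threshold_value_dy x y)"
proof -
  have fst_cont: "continuous_on (S \<times> S) (\<lambda>z. g (fst z))" if "continuous_on S g" for g
    by (rule continuous_on_compose2[OF that continuous_on_fst[OF continuous_on_id]]) auto
  have snd_cont: "continuous_on (S \<times> S) (\<lambda>z. g (snd z))" if "continuous_on S g" for g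
    by (rule continuous_on_compose2[OF that continuous_on_snd[OF continuous_on_id]]) auto
  note conts = fst_cont snd_cont C1_differentiable_on_continuous C1_differentiable_on_continuous_deriv
    psi_C1 phi_C1 psi_coeff_C1 phi_coeff_C1 mu_C1
  show "continuous_on (S \<times> S) (\<lambda>(x, y). threshold_value x y)"
    unfolding threshold_value_def case_prod_unfold using r_pos
    by (intro continuous_on_if_fst_le_snd continuous_intros conts) (auto simp: smooth_fit_value)
  show "continuous_on (S \<times> S) (\<lambda>(x, y). threshold_value_dx x y)"
    unfolding threshold_value_dx_def case_prod_unfold
    by (intro continuous_on_if_fst_le_snd continuous_intros conts) (auto simp: smooth_fit_slope)
  show "continuous_on (S \<times> S) (\<lambda>(x, y). threshold_value_dxx x y)"
    unfolding threshold_value_dxx_def case_prod_unfold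
    by (intro continuous_on_if_fst_le_snd continuous_intros conts) (auto simp: smooth_fit_curvature)
  show "continuous_on (S \<times> S) (\<lambda>(x, y). threshold_value_dy x y)"
    unfolding threshold_value_dy_def case_prod_unfold using r_pos
    by (intro continuous_on_if_fst_le_snd continuous_intros conts) (auto simp: smooth_fit_value_deriv)
qed

lemma threshold_value_derivs:
  assumes x: "x \<in> S" and y: "y \<in> S"
  shows "((\<lambda>t. threshold_value t y) has_real_derivative threshold_value_dx x y) (at x)"
    and "((\<lambda>t. threshold_value_dx t y) has_real_derivative threshold_value_dxx x y) (at x)"
    and "((\<lambda>t. threshold_value x t) has_real_derivative threshold_value_dy x y) (at y)"
proof -
  show "((\<lambda>t. threshold_value t y) has_real_derivative threshold_value_dx x y) (at x)"
    unfolding threshold_value_def[abs_def] threshold_value_dx_def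
    by (intro has_real_derivative_if_le derivative_eq_intros)
       (auto simp: smooth_fit_value smooth_fit_slope y intro!: psi_deriv phi_deriv x)
  show "((\<lambda>t. threshold_value_dx t y) has_real_derivative threshold_value_dxx x y) (at x)"
    unfolding threshold_value_dx_def[abs_def] threshold_value_dxx_def
    by (intro has_real_derivative_if_le derivative_eq_intros)
       (auto simp: smooth_fit_slope smooth_fit_curvature y intro!: psi_deriv2 phi_deriv2 x)
  \<comment> \<open>in \<open>y\<close> the pasting point is \<open>x\<close>, with the linear branch to the left\<close>
  have "((\<lambda>t. if t \<le> x then x - t + \<mu> t / r else psi_coeff t * \<psi> x + phi_coeff t * \<phi> x)
      has_real_derivative (if y \<le> x then deriv \<mu> y / r - 1
        else deriv psi_coeff y * \<psi> x + deriv phi_coeff y * \<phi> x)) (at y)"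
    using r_pos
    by (intro has_real_derivative_if_le derivative_eq_intros)
       (auto simp: smooth_fit_value smooth_fit_value_deriv x y intro!: C1_differentiable_on_has_deriv
         mu_C1 psi_coeff_C1 phi_coeff_C1)
  moreover have "threshold_value x t =
      (if t \<le> x then x - t + \<mu> t / r else psi_coeff t * \<psi> x + phi_coeff t * \<phi> x)" for t
    using smooth_fit_value[OF x] by (auto simp: threshold_value_def)
  moreover have "threshold_value_dy x y = (if y \<le> x then deriv \<mu> y / r - 1
      else deriv psi_coeff y * \<psi> x + deriv phi_coeff y * \<phi> x)"
    using smooth_fit_value_deriv[OF x] by (auto simp: threshold_value_dy_def)
  ultimately show "((\<lambda>t. threshold_value x t) has_real_derivative threshold_value_dy x y) (at y)"
    by simp
qed

lemma C21_open_threshold_value: "C21_open (S \<times> S) threshold_value"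
  unfolding C21_open_def
  by (rule exI[of _ threshold_value_dx], rule exI[of _ threshold_value_dxx],
      rule exI[of _ threshold_value_dy])
     (auto simp: continuous_on_threshold_value threshold_value_derivs)

end

section \<open>The distribution function\<close>

locale bounded_support_density =
  fixes \<alpha> :: ereal and f F :: "real \<Rightarrow> real" and ybar :: real
  assumes alpha_neg: "\<alpha> < 0"
    and ybar_pos: "ybar > 0"
    and f_int: "set_integrable lborel (state_space \<alpha>) f"
    and f_total: "(LINT y:state_space \<alpha>|lborel. f y) = 1"
    and F_def: "\<And>x. x \<in> state_space \<alpha> \<Longrightarrow> F x = (LINT y:{y\<in>state_space \<alpha>. y \<le> x}|lborel. f y)"
    and f_cont: "continuous_on {0..ybar} f"
    and f_pos: "\<And>x. x \<in> {0..ybar} \<Longrightarrow> f x > 0"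
    and f_zero: "\<And>x. x \<in> state_space \<alpha> \<Longrightarrow> x \<notin> {0..ybar} \<Longrightarrow> f x = 0"
begin

lemma F_eq_integral:
  assumes m: "0 \<le> m"
  shows "F m = integral {0..m} f"
proof -
  have int: "set_integrable lborel {0..m} f"
    by (rule set_integrable_subset[OF f_int]) (auto intro: nonneg_in_state_space alpha_neg)
  have "F m = (LINT y:{y\<in>state_space \<alpha>. y \<le> m}|lborel. f y)"
    using F_def nonneg_in_state_space[OF alpha_neg m] by blast
  also have "\<dots> = (LINT y:{0..m}|lborel. f y)"
    unfolding set_lebesgue_integral_def
    by (rule Bochner_Integration.integral_cong)
       (use f_zero nonneg_in_state_space[OF alpha_neg] in \<open>auto simp: indicator_def\<close>)
  also have "\<dots> = integral {0..m} f"
    using set_borel_integral_eq_integral(2)[OF int] .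
  finally show ?thesis .
qed

lemma F_eq_1:
  assumes "ybar \<le> m"
  shows "F m = 1"
proof -
  have "F m = (LINT y:{y\<in>state_space \<alpha>. y \<le> m}|lborel. f y)"
    using F_def nonneg_in_state_space[OF alpha_neg] ybar_pos assms by auto
  also have "\<dots> = (LINT y:state_space \<alpha>|lborel. f y)"
    unfolding set_lebesgue_integral_def
    by (rule Bochner_Integration.integral_cong) (use f_zero assms in \<open>auto simp: indicator_def\<close>)
  finally show ?thesis using f_total by simp
qed

text \<open>\<open>F\<close> has a kink at \<open>ybar\<close>, where \<open>f\<close> jumps to \<open>0\<close>; integrating the clamped density gives a
  \<open>C\<^sup>1\<close> extension of \<open>F\<close> restricted to \<open>[0, ybar]\<close>.\<close>
definition f_ext :: "real \<Rightarrow> real" where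
  "f_ext t = f (max 0 (min t ybar))"

definition F_ext :: "real \<Rightarrow> real" where
  "F_ext m = integral {0..m} f_ext"

lemma f_ext_cont: "continuous_on A f_ext"
proof -
  have "continuous_on UNIV (\<lambda>t. f (max 0 (min t ybar)))"
    by (rule continuous_on_compose2[OF f_cont]) (use ybar_pos in \<open>auto intro!: continuous_intros\<close>)
  then show ?thesis unfolding f_ext_def[abs_def] by (rule continuous_on_subset) simp
qed

lemma F_ext_deriv:
  assumes "0 < m"
  shows "(F_ext has_real_derivative f_ext m) (at m)"
proof -
  have "(F_ext has_real_derivative f_ext m) (at m within {0..m + 1})"
    unfolding F_ext_def[abs_def] by (rule integral_has_real_derivative[OF f_ext_cont]) (use assms in auto)
  then show ?thesis using assms by (simp add: at_within_Icc_at)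
qed

lemma F_ext_C1: "F_ext C1_differentiable_on {0<..}"
  by (rule C1_differentiable_onI_real[OF F_ext_deriv f_ext_cont]) simp

lemma F_ext_cont: "continuous_on {0..c} F_ext"
  unfolding F_ext_def by (intro indefinite_integral_continuous_1 integrable_continuous_interval f_ext_cont)

lemma F_eq_F_ext: "m \<in> {0..ybar} \<Longrightarrow> F m = F_ext m"
  using F_eq_integral[of m] unfolding F_ext_def by (auto intro!: integral_cong simp: f_ext_def)

lemma F_cont: "continuous_on {0..} F"
proof -
  have "continuous_on {0..} (\<lambda>m. F_ext (min m ybar))"
    by (rule continuous_on_compose2[OF F_ext_cont[of ybar]])
       (use ybar_pos in \<open>auto intro!: continuous_intros\<close>)
  moreover have "F_ext (min m ybar) = F m" if "m \<in> {0..}" for m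
    using that F_eq_F_ext[of "min m ybar"] F_eq_F_ext[of ybar] F_eq_1[of m] F_eq_1[of ybar] ybar_pos
    by (cases "m \<le> ybar") auto
  ultimately show ?thesis by (rule continuous_on_eq)
qed

lemma F_pos:
  assumes "0 < m"
  shows "F m > 0"
proof (cases "m \<le> ybar")
  case True
  have "F_ext 0 < F_ext m"
  proof (rule DERIV_pos_imp_increasing_open[OF assms])
    show "\<exists>y. (F_ext has_real_derivative y) (at x) \<and> 0 < y" if "0 < x" "x < m" for x
      using F_ext_deriv[OF that(1)] f_pos ybar_pos by (auto simp: f_ext_def)
    show "continuous_on {0..m} F_ext" by (rule F_ext_cont)
  qed
  then show ?thesis using F_eq_F_ext[of m] True assms by (simp add: F_ext_def)
qed (simp add: F_eq_1)

end

section \<open>Regularity of \<open>W\<close>\<close>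

locale stopping_problem =
  fundamental_pair "state_space \<alpha>" \<mu> \<sigma> \<psi> \<phi> r + bounded_support_density \<alpha> f F ybar
  for \<alpha> :: ereal and \<mu> \<sigma> \<psi> \<phi> :: "real \<Rightarrow> real" and r :: real
    and f F :: "real \<Rightarrow> real" and ybar :: real +
  fixes U b :: "real \<Rightarrow> real" and xbar mbar :: real
  assumes U_cont: "continuous_on {0..} U"
    and deriv_mu_less: "\<And>x. 0 \<le> x \<Longrightarrow> deriv \<mu> x < r"
    and b_range: "b ` {0..xbar} \<subseteq> {0..xbar}"
    and b_cont: "continuous_on {0..xbar} b"
    and b_ode: "\<And>m. m \<in> {0<..<min xbar ybar} \<Longrightarrow>
      (b has_real_derivative Efun \<psi> \<phi> \<mu> r U f F (b m) m) (at m)"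
    and b_deriv_cont: "continuous_on {0<..<min xbar ybar} (\<lambda>m. Efun \<psi> \<phi> \<mu> r U f F (b m) m)"
    and b_const: "\<And>m. m \<in> {min xbar ybar<..xbar} \<Longrightarrow> b m = b (min xbar ybar)"
    and mbar_mem: "mbar \<in> {0<..<xbar}"
    and mbar_fix: "b mbar = mbar"
begin

abbreviation W :: "real \<Rightarrow> real \<Rightarrow> real" where
  "W \<equiv> Wfun \<psi> \<phi> \<mu> r U f F b mbar"

lemma nonneg_in_S: "0 \<le> x \<Longrightarrow> x \<in> state_space \<alpha>"
  by (rule nonneg_in_state_space[OF alpha_neg])

lemma b_in_S: "m \<in> {0..xbar} \<Longrightarrow> b m \<in> state_space \<alpha>"
  using b_range by (intro nonneg_in_S) (auto simp: image_subset_iff)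

lemma W_below_mbar:
  assumes "0 \<le> m" "m \<le> mbar"
  shows "W x m = F m * threshold_value x (b m)"
proof -
  have y: "b m \<in> state_space \<alpha>" using assms mbar_mem by (intro b_in_S) auto
  have "Acoef \<psi> \<phi> F b m = F m * psi_coeff (b m)"
    unfolding Acoef_def by (simp add: psi_coeff_Cramer[OF y, symmetric])
  moreover have "Bcoef \<psi> \<phi> F b m = F m * phi_coeff (b m)"
    unfolding Bcoef_def using phi_coeff_Cramer[OF y] by (simp add: times_divide_eq_right[symmetric])
  ultimately show ?thesis
    unfolding Wfun_def threshold_value_def using assms by (simp add: algebra_simps)
qed

lemma W_above_mbar:
  assumes "mbar \<le> m" "m \<le> x"
  shows "W x m = \<mu> mbar / r * F mbar + (x - m) * F m + (LBINT s=mbar..m. U s * f s + F s)"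
proof (cases "m = mbar")
  case True
  have "mbar \<in> state_space \<alpha>" using mbar_mem nonneg_in_S by simp
  then show ?thesis
    using True assms W_below_mbar[of mbar x] threshold_value_above[of mbar x] mbar_mem mbar_fix
    by (simp add: algebra_simps)
qed (use assms in \<open>simp add: Wfun_def\<close>)

definition reward_primitive :: "real \<Rightarrow> real" where
  "reward_primitive m = integral {0..m} (\<lambda>s. U s * f_ext s + F_ext s)"

lemma reward_integrand_cont: "continuous_on {0..c} (\<lambda>s. U s * f_ext s + F_ext s)"
  by (intro continuous_intros continuous_on_subset[OF U_cont] f_ext_cont F_ext_cont) auto

lemma reward_primitive_deriv:
  assumes "0 < m"
  shows "(reward_primitive has_real_derivative U m * f_ext m + F_ext m) (at m)"
proof -
  have "(reward_primitive has_real_derivative U m * f_ext m + F_ext m) (at m within {0..m + 1})"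
    unfolding reward_primitive_def[abs_def]
    by (rule integral_has_real_derivative[OF reward_integrand_cont]) (use assms in auto)
  then show ?thesis using assms by (simp add: at_within_Icc_at)
qed

lemma reward_primitive_C1: "reward_primitive C1_differentiable_on {0<..}"
proof (rule C1_differentiable_onI_real[OF reward_primitive_deriv])
  show "continuous_on {0<..} (\<lambda>s. U s * f_ext s + F_ext s)"
    by (intro continuous_intros continuous_on_subset[OF U_cont] f_ext_cont
        C1_differentiable_on_continuous[OF F_ext_C1]) auto
qed simp

lemma reward_integrand_on_support: "s \<in> {0..ybar} \<Longrightarrow> U s * f s + F s = U s * f_ext s + F_ext s"
  using F_eq_F_ext[of s] by (simp add: f_ext_def)

lemma reward_integrand_cont_on_support:
  assumes "0 \<le> a" "c \<le> ybar"
  shows "continuous_on {a..c} (\<lambda>s. U s * f s + F s)"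
proof -
  have "continuous_on {a..c} (\<lambda>s. U s * f_ext s + F_ext s)"
    by (rule continuous_on_subset[OF reward_integrand_cont[of c]]) (use assms in auto)
  then show ?thesis
    by (rule continuous_on_eq) (use assms in \<open>simp add: reward_integrand_on_support\<close>)
qed

lemma lbint_eq_reward_primitive:
  assumes "mbar \<le> m" "m \<le> ybar"
  shows "(LBINT s=mbar..m. U s * f s + F s) = reward_primitive m - reward_primitive mbar"
proof (rule interval_integral_FTC_finite)
  show "continuous_on {min mbar m..max mbar m} (\<lambda>s. U s * f s + F s)"
    using assms mbar_mem by (simp add: reward_integrand_cont_on_support)
  fix s assume "min mbar m \<le> s" "s \<le> max mbar m"
  then have s: "s \<in> {mbar..m}" using assms by simp
  then have "(reward_primitive has_real_derivative U s * f s + F s) (at s)"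
    using reward_primitive_deriv[of s] mbar_mem assms by (simp add: reward_integrand_on_support)
  then show "(reward_primitive has_vector_derivative U s * f s + F s) (at s within {min mbar m..max mbar m})"
    by (simp add: has_real_derivative_iff_has_vector_derivative has_vector_derivative_at_within)
qed

lemma reward_integrand_beyond_support: "ybar < s \<Longrightarrow> U s * f s + F s = 1"
  using f_zero[of s] F_eq_1[of s] nonneg_in_S[of s] ybar_pos by simp

lemma lbint_beyond_support_eq:
  assumes "ybar \<le> a" "a \<le> m"
  shows "(LBINT s=a..m. U s * f s + F s) = m - a"
proof -
  have "(LBINT s=a..m. U s * f s + F s) = (LBINT s=a..m. 1)"
    by (rule interval_lebesgue_integral_cong)
       (use assms in \<open>auto intro!: reward_integrand_beyond_support\<close>)
  then show ?thesis by simp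
qed

lemma lbint_beyond_support:
  assumes "max mbar ybar \<le> m"
  shows "(LBINT s=mbar..m. U s * f s + F s)
    = (LBINT s=mbar..max mbar ybar. U s * f s + F s) + (m - max mbar ybar)"
proof (cases "mbar < ybar")
  case True
  let ?g = "\<lambda>s. U s * f s + F s"
  have "set_integrable lborel {mbar..ybar} ?g"
  proof (rule borel_integrable_atLeastAtMost')
    show "continuous_on {mbar..ybar} ?g"
      using mbar_mem by (simp add: reward_integrand_cont_on_support)
  qed
  moreover have "set_integrable lborel {ybar<..m} ?g"
  proof -
    have "set_integrable lborel {ybar<..m} (\<lambda>s. 1::real)"
      using borel_integrable_atLeastAtMost'[of ybar m "\<lambda>s. 1::real"]
      by (auto intro: set_integrable_subset)
    then show ?thesis
      using set_integrable_cong[of lborel lborel "{ybar<..m}" "{ybar<..m}" "\<lambda>s. 1" ?g]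
      by (simp add: reward_integrand_beyond_support)
  qed
  ultimately have "set_integrable lborel ({mbar..ybar} \<union> {ybar<..m}) ?g"
    by (rule set_integrable_Un) auto
  then have "interval_lebesgue_integrable lborel mbar m ?g"
    using True assms unfolding interval_lebesgue_integrable_def
    by (auto intro: set_integrable_subset)
  then have "(LBINT s=mbar..ybar. ?g s) + (LBINT s=ybar..m. ?g s) = (LBINT s=mbar..m. ?g s)"
    using True assms by (intro interval_integral_sum) (simp add: min_def max_def)
  then show ?thesis
    using True assms lbint_beyond_support_eq[of ybar m] by simp
qed (use assms lbint_beyond_support_eq[of mbar m] in simp)

lemma b_deriv_cont_upto_ybar:
  assumes "ybar < xbar"
  shows "continuous_on {0<..ybar} (\<lambda>m. Efun \<psi> \<phi> \<mu> r U f F (b m) m)"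
proof -
  let ?I = "{0<..ybar}"
  have b_cont_I: "continuous_on ?I b"
    by (rule continuous_on_subset[OF b_cont]) (use assms in auto)
  have b_I: "b m \<in> state_space \<alpha>" "0 \<le> b m" if "m \<in> ?I" for m
    using that assms b_in_S b_range by (auto simp: image_subset_iff)
  have along_b: "continuous_on ?I (\<lambda>m. g (b m))" if "continuous_on (state_space \<alpha>) g" for g
    by (rule continuous_on_compose2[OF that b_cont_I]) (auto dest: b_I)
  have on_I: "continuous_on ?I g" if "continuous_on (state_space \<alpha>) g" for g
    by (rule continuous_on_subset[OF that]) (auto intro: nonneg_in_S)
  have nz: "1 - deriv \<mu> (b m) / r \<noteq> 0" "Dfun \<psi> \<phi> (b m) m \<noteq> 0" "F m \<noteq> 0" if "m \<in> ?I" for m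
    using deriv_mu_less[OF b_I(2)[OF that]] r_pos Dfun_pos[OF b_I(1)[OF that] nonneg_in_S, of m] that
      F_pos[of m] by auto
  note on_S = C1_differentiable_on_continuous[OF psi_C1(1)] C1_differentiable_on_continuous[OF phi_C1(1)]
    C1_differentiable_on_continuous[OF psi_C1(2)] C1_differentiable_on_continuous[OF phi_C1(2)]
    C1_differentiable_on_continuous[OF mu_C1] C1_differentiable_on_continuous_deriv[OF mu_C1]
  have f_F_U: "continuous_on ?I f" "continuous_on ?I F" "continuous_on ?I U"
    by (auto intro: continuous_on_subset[OF f_cont] continuous_on_subset[OF F_cont]
        continuous_on_subset[OF U_cont])
  show ?thesis
    unfolding Efun_def Nfun_def Dfun_def
    by (intro continuous_on_mult continuous_on_divide continuous_on_add continuous_on_diff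
        continuous_on_const along_b[OF on_S(1)] along_b[OF on_S(2)] along_b[OF on_S(3)]
        along_b[OF on_S(4)] along_b[OF on_S(5)] along_b[OF on_S(6)] on_I[OF on_S(1)]
        on_I[OF on_S(2)] f_F_U)
       (use nz r_pos in \<open>auto simp: Dfun_def\<close>)
qed

definition b_ext :: "real \<Rightarrow> real" where
  "b_ext m = (if m \<le> ybar then b m
    else b ybar + Efun \<psi> \<phi> \<mu> r U f F (b ybar) ybar * (m - ybar))"

lemma b_ext_C1:
  assumes "ybar < xbar"
  shows "b_ext C1_differentiable_on {0<..}"
  unfolding b_ext_def[abs_def]
proof (rule C1_differentiable_on_tangent_extension[OF ybar_pos])
  show "continuous_on {0..ybar} b"
    by (rule continuous_on_subset[OF b_cont]) (use assms in auto)
  show "(b has_real_derivative Efun \<psi> \<phi> \<mu> r U f F (b m) m) (at m)" if "m \<in> {0<..<ybar}" for m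
    using b_ode[of m] that assms by simp
qed (rule b_deriv_cont_upto_ybar[OF assms])

lemma C21_on_W_initialI:
  assumes J: "open J" "{0<..c} \<subseteq> J" "J \<subseteq> {0<..}"
    and \<beta>: "\<beta> C1_differentiable_on J" "\<beta> ` J \<subseteq> state_space \<alpha>" "\<And>m. m \<in> {0<..c} \<Longrightarrow> \<beta> m = b m"
    and c: "c \<le> mbar" "c \<le> ybar"
  shows "C21_on {(x, m) \<in> Jset. 0 < m \<and> m \<le> c} W"
proof (rule C21_onI[OF J(1,3)])
  show "C21_open ({0<..} \<times> J) (\<lambda>x m. F_ext m * threshold_value x (\<beta> m))"
    by (rule C21_open_scaled_compose[OF C21_open_threshold_value
          C1_differentiable_on_subset[OF F_ext_C1 J(3)] \<beta>(1)])
       (use \<beta>(2) nonneg_in_S in auto)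
  show "{(x, m) \<in> Jset. 0 < m \<and> m \<le> c} \<subseteq> {0<..} \<times> J"
    using J(2) by (auto simp: Jset_def)
  fix x m assume "(x, m) \<in> {(x, m) \<in> Jset. 0 < m \<and> m \<le> c}"
  then have "0 < m" "m \<le> c" by (auto simp: Jset_def)
  then show "W x m = F_ext m * threshold_value x (\<beta> m)"
    using W_below_mbar[of m x] F_eq_F_ext[of m] \<beta>(3)[of m] c by simp
qed

lemma C21_on_W_initial: "C21_on {(x, m) \<in> Jset. 0 < m \<and> m \<le> min mbar ybar} W"
proof (cases "mbar < ybar")
  case True
  let ?J = "{0<..<min xbar ybar}"
  have "b C1_differentiable_on ?J"
    by (rule C1_differentiable_onI_real[OF b_ode b_deriv_cont])
  moreover have "b ` ?J \<subseteq> state_space \<alpha>" by (auto intro: b_in_S)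
  ultimately show ?thesis
    using True mbar_mem by (intro C21_on_W_initialI) auto
next
  case False
  then have "ybar < xbar" using mbar_mem by simp
  define J where "J = {0<..} \<inter> b_ext -` state_space \<alpha>"
  have "continuous_on {0<..} b_ext"
    using C1_differentiable_on_continuous[OF b_ext_C1[OF \<open>ybar < xbar\<close>]] .
  then have "open J"
    unfolding J_def using open_S by (simp add: continuous_on_open_vimage Int_commute)
  moreover have "{0<..ybar} \<subseteq> J"
    using \<open>ybar < xbar\<close> by (auto simp: J_def b_ext_def intro!: b_in_S)
  moreover have "b_ext C1_differentiable_on J"
    by (rule C1_differentiable_on_subset[OF b_ext_C1[OF \<open>ybar < xbar\<close>]]) (auto simp: J_def)
  ultimately show ?thesis
    using False by (intro C21_on_W_initialI[where \<beta> = b_ext]) (auto simp: J_def b_ext_def)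
qed

lemma C21_on_W_between_ybar_mbar:
  assumes "ybar < mbar"
  shows "C21_on {(x, m) \<in> Jset. ybar \<le> m \<and> m \<le> mbar} W"
proof (rule C21_onI[OF open_greaterThan order_refl])
  show "C21_open ({0<..} \<times> {0<..}) (\<lambda>x m. (\<lambda>_. 1) m * threshold_value x ((\<lambda>_. b ybar) m))"
    using assms mbar_mem b_in_S[of ybar] ybar_pos
    by (intro C21_open_scaled_compose[OF C21_open_threshold_value C1_differentiable_on_const
          C1_differentiable_on_const])
       (auto intro: nonneg_in_S)
  show "{(x, m) \<in> Jset. ybar \<le> m \<and> m \<le> mbar} \<subseteq> {0<..} \<times> {0<..}"
    using ybar_pos by (auto simp: Jset_def)
  fix x m assume "(x, m) \<in> {(x, m) \<in> Jset. ybar \<le> m \<and> m \<le> mbar}"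
  then have m: "ybar \<le> m" "m \<le> mbar" by (auto simp: Jset_def)
  have "b m = b ybar"
    using b_const[of m] m assms mbar_mem by (cases "m = ybar") auto
  then show "W x m = (\<lambda>_. 1) m * threshold_value x ((\<lambda>_. b ybar) m)"
    using W_below_mbar[of m x] F_eq_1[of m] m ybar_pos by simp
qed

lemma C21_on_W_between_mbar_ybar:
  assumes "mbar < ybar"
  shows "C21_on {(x, m) \<in> Jset. mbar \<le> m \<and> m \<le> ybar} W"
proof (rule C21_onI[OF open_greaterThan order_refl])
  show "C21_open ({0<..} \<times> {0<..}) (\<lambda>x m. x * F_ext m
      + (\<mu> mbar / r * F mbar - m * F_ext m + (reward_primitive m - reward_primitive mbar)))"
    by (intro C21_open_affine F_ext_C1 C1_differentiable_on_add C1_differentiable_on_diff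
        C1_differentiable_on_mult C1_differentiable_on_const C1_differentiable_on_ident
        reward_primitive_C1)
  show "{(x, m) \<in> Jset. mbar \<le> m \<and> m \<le> ybar} \<subseteq> {0<..} \<times> {0<..}"
    using mbar_mem by (auto simp: Jset_def)
  fix x m assume "(x, m) \<in> {(x, m) \<in> Jset. mbar \<le> m \<and> m \<le> ybar}"
  then have m: "mbar \<le> m" "m \<le> ybar" "m \<le> x" by (auto simp: Jset_def)
  then show "W x m = x * F_ext m
      + (\<mu> mbar / r * F mbar - m * F_ext m + (reward_primitive m - reward_primitive mbar))"
    using W_above_mbar[of m x] F_eq_F_ext[of m] lbint_eq_reward_primitive[of m] mbar_mem
    by (simp add: algebra_simps)
qed

lemma C21_on_W_tail: "C21_on {(x, m) \<in> Jset. max mbar ybar \<le> m} W"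
proof (rule C21_onI[OF open_greaterThan order_refl])
  let ?a = "max mbar ybar"
  show "C21_open ({0<..} \<times> {0<..}) (\<lambda>x m. x * (\<lambda>_. 1) m
      + (\<lambda>_. \<mu> mbar / r * F mbar - ?a + (LBINT s=mbar..?a. U s * f s + F s)) m)"
    by (intro C21_open_affine C1_differentiable_on_const)
  show "{(x, m) \<in> Jset. ?a \<le> m} \<subseteq> {0<..} \<times> {0<..}"
    using mbar_mem by (auto simp: Jset_def)
  fix x m assume "(x, m) \<in> {(x, m) \<in> Jset. ?a \<le> m}"
  then have m: "?a \<le> m" "m \<le> x" by (auto simp: Jset_def)
  then show "W x m = x * (\<lambda>_. 1) m
      + (\<lambda>_. \<mu> mbar / r * F mbar - ?a + (LBINT s=mbar..?a. U s * f s + F s)) m"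
    using W_above_mbar[of m x] F_eq_1[of m] lbint_beyond_support[of m] by simp
qed

lemma W_continuous_below: "continuous_on {(x, m) \<in> Jset. 0 \<le> m \<and> m \<le> mbar} (\<lambda>(x, m). W x m)"
proof -
  let ?L = "{(x, m) \<in> Jset. 0 \<le> m \<and> m \<le> mbar}"
  have TV: "continuous_on (state_space \<alpha> \<times> state_space \<alpha>) (\<lambda>(x, y). threshold_value x y)"
    using C21_open_threshold_value unfolding C21_open_def by blast
  have b_snd: "continuous_on ?L (\<lambda>z. b (snd z))"
    by (rule continuous_on_compose2[OF b_cont continuous_on_snd[OF continuous_on_id]])
       (use mbar_mem in \<open>auto simp: Jset_def\<close>)
  have "continuous_on ?L (\<lambda>z. (\<lambda>(x, y). threshold_value x y) (fst z, b (snd z)))"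
    by (rule continuous_on_compose2[OF TV continuous_on_Pair[OF continuous_on_fst[OF continuous_on_id] b_snd]])
       (use mbar_mem in \<open>auto simp: Jset_def intro!: nonneg_in_S b_in_S\<close>)
  moreover have "continuous_on ?L (\<lambda>z. F (snd z))"
    by (rule continuous_on_compose2[OF F_cont continuous_on_snd[OF continuous_on_id]])
       (auto simp: Jset_def)
  ultimately have "continuous_on ?L (\<lambda>z. F (snd z) * threshold_value (fst z) (b (snd z)))"
    by (auto intro: continuous_on_mult)
  then show ?thesis
    by (rule continuous_on_eq) (auto simp: Jset_def W_below_mbar)
qed

lemma W_continuous: "continuous_on Jset (\<lambda>(x, m). W x m)"
proof -
  have above: "continuous_on {(x, m) \<in> Jset. mbar \<le> m} (\<lambda>(x, m). W x m)"
  proof (cases "mbar < ybar")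
    case True
    have "C21_on {(x, m) \<in> Jset. ybar \<le> m} W"
      using C21_on_W_tail True by simp
    then have "continuous_on ({(x, m) \<in> Jset. mbar \<le> m \<and> m \<le> ybar} \<union> {(x, m) \<in> Jset. ybar \<le> m})
        (\<lambda>(x, m). W x m)"
      by (intro continuous_on_closed_Un closed_Jset_band closed_Jset_above
          C21_on_imp_continuous_on C21_on_W_between_mbar_ybar[OF True])
    then show ?thesis by (rule continuous_on_subset) auto
  next
    case False
    then show ?thesis using C21_on_imp_continuous_on[OF C21_on_W_tail] by simp
  qed
  have "Jset = {(x, m) \<in> Jset. 0 \<le> m \<and> m \<le> mbar} \<union> {(x, m) \<in> Jset. mbar \<le> m}"
    by (auto simp: Jset_def)
  then show ?thesis
    using continuous_on_closed_Un[OF closed_Jset_band closed_Jset_above W_continuous_below above]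
    by simp
qed

theorem class_R_W: "class_R W"
proof -
  consider "mbar < ybar" | "mbar = ybar" | "ybar < mbar" by linarith
  then show ?thesis
  proof cases
    case 1
    then show ?thesis
      using class_RI_two_breakpoints[OF W_continuous _ 1 _ C21_on_W_between_mbar_ybar[OF 1]]
        C21_on_W_initial C21_on_W_tail mbar_mem by simp
  next
    case 2
    then show ?thesis
      using class_RI_one_breakpoint[OF W_continuous ybar_pos] C21_on_W_initial C21_on_W_tail
      by simp
  next
    case 3
    then show ?thesis
      using class_RI_two_breakpoints[OF W_continuous ybar_pos 3 _ C21_on_W_between_ybar_mbar[OF 3]]
        C21_on_W_initial C21_on_W_tail by simp
  qed
qed

end

theorem lemma6:
  fixes \<alpha> :: ereal
    and \<mu> \<sigma> \<psi> \<phi> f F U U' U'' b :: "real \<Rightarrow> real"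
    and r ybar xbar x0 mbar ustar :: real
  (* state space, coefficients, natural boundaries *)
  assumes alpha: "\<alpha> < 0"
    and mu_lip: "\<exists>C. C-lipschitz_on (state_space \<alpha>) \<mu>"
    and sigma_lip: "\<exists>C. C-lipschitz_on (state_space \<alpha>) \<sigma>"
    and sigma_pos: "\<forall>x\<in>state_space \<alpha>. \<sigma> x > 0"
    and nat_left: "natural_left \<alpha> \<mu> \<sigma>"
    and nat_right: "natural_right \<mu> \<sigma>"
    and r_pos: "r > 0"
  (* the density f and distribution function F *)
    and ybar_pos: "ybar > 0"
    and f_nonneg: "\<forall>x\<in>state_space \<alpha>. f x \<ge> 0"
    and f_int: "set_integrable lborel (state_space \<alpha>) f"
    and f_total: "(LINT y:state_space \<alpha>|lborel. f y) = 1"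
    and F_def: "\<forall>x\<in>state_space \<alpha>. F x = (LINT y:{y\<in>state_space \<alpha>. y \<le> x}|lborel. f y)"
    and f_lip: "\<exists>C. C-lipschitz_on {0..ybar} f"
    and f_pos: "\<forall>x\<in>{0..ybar}. f x > 0"
    and f_zero: "\<forall>x\<in>state_space \<alpha>. x \<notin> {0..ybar} \<longrightarrow> f x = 0"
  (* U *)
    and U_nonneg: "\<forall>x\<ge>0. U x \<ge> 0"
  (* Assumption (a) *)
    and mu_C1: "\<forall>x\<in>state_space \<alpha>. \<mu> differentiable (at x)"
    and mu'_lip: "\<exists>C. C-lipschitz_on (state_space \<alpha>) (deriv \<mu>)"
    and sigma_C1: "\<forall>x\<in>state_space \<alpha>. \<sigma> differentiable (at x)"
    and sigma'_lip: "\<exists>C. C-lipschitz_on (state_space \<alpha>) (deriv \<sigma>)"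
    and mu0: "\<mu> 0 > r * U 0"
    and mu'_bound: "\<exists>c<r. \<forall>x\<ge>0. deriv \<mu> x \<le> c"
  (* Assumption (b) *)
    and U_mono: "mono_on {0..} U"
    and U_concave: "concave_on {0..} U"
    and U_d1: "\<forall>x\<ge>0. (U has_real_derivative U' x) (at x within {0..})"
    and U_d2: "\<forall>x\<ge>0. (U' has_real_derivative U'' x) (at x within {0..})"
    and U_C2: "continuous_on {0..} U''"
    and ustar: "ustar \<ge> 0"
    and U'_ge: "\<forall>x\<in>{0..ustar}. U' x \<ge> 1"
    and U'_eq: "\<forall>x\<ge>ustar. U' x = 1"
    and U_gen: "\<forall>x\<in>{0..<ustar}. \<mu> x * U' x + 1/2 * (\<sigma> x)\<^sup>2 * U'' x - r * U x > 0"
  (* Assumption (c) *)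
    and mu_twice: "\<forall>x\<ge>0. deriv \<mu> differentiable (at x)"
    and mu''_nonpos: "\<forall>x\<ge>0. deriv (deriv \<mu>) x \<le> 0"
    and hazard_decr: "antimono_on {0<..ybar} (\<lambda>m. f m / F m)"
  (* the point xbar *)
    and xbar_pos: "xbar > 0"
    and xbar_left: "\<forall>x\<in>{0..<xbar}. \<mu> x - r * U x > 0"
    and xbar_right: "\<forall>x>xbar. \<mu> x - r * U x < 0"
  (* the fundamental solutions psi and phi *)
    and psi_C2: "\<forall>x\<in>state_space \<alpha>. \<psi> differentiable (at x) \<and> deriv \<psi> differentiable (at x)"
    and phi_C2: "\<forall>x\<in>state_space \<alpha>. \<phi> differentiable (at x) \<and> deriv \<phi> differentiable (at x)"
    and psi_ode: "\<forall>x\<in>state_space \<alpha>.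
        1/2 * (\<sigma> x)\<^sup>2 * deriv (deriv \<psi>) x + \<mu> x * deriv \<psi> x - r * \<psi> x = 0"
    and phi_ode: "\<forall>x\<in>state_space \<alpha>.
        1/2 * (\<sigma> x)\<^sup>2 * deriv (deriv \<phi>) x + \<mu> x * deriv \<phi> x - r * \<phi> x = 0"
    and psi_pos: "\<forall>x\<in>state_space \<alpha>. \<psi> x > 0"
    and phi_pos: "\<forall>x\<in>state_space \<alpha>. \<phi> x > 0"
    and psi_incr: "strict_mono_on (state_space \<alpha>) \<psi>"
    and phi_decr: "strict_antimono_on (state_space \<alpha>) \<phi>"
  (* x0 = eta(0) *)
    and x0_mem: "x0 \<in> {0..xbar}"
    and x0_root: "Nfun \<psi> \<phi> \<mu> r U x0 0 = 0"
    and x0_unique: "\<forall>x\<in>{0..xbar}. Nfun \<psi> \<phi> \<mu> r U x 0 = 0 \<longrightarrow> x = x0"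
  (* the boundary b *)
    and b_range: "b ` {0..xbar} \<subseteq> {0..xbar}"
    and b_cont: "continuous_on {0..xbar} b"
    and b0: "b 0 = x0"
    and b_ode: "\<forall>m\<in>{0<..<min xbar ybar}.
        (b has_real_derivative Efun \<psi> \<phi> \<mu> r U f F (b m) m) (at m)"
    and b_C1: "continuous_on {0<..<min xbar ybar} (\<lambda>m. Efun \<psi> \<phi> \<mu> r U f F (b m) m)"
    and b_const: "\<forall>m\<in>{min xbar ybar<..xbar}. b m = b (min xbar ybar)"
  (* mbar = min {m. b m = m} *)
    and mbar_mem: "mbar \<in> {0<..<xbar}"
    and mbar_fix: "b mbar = mbar"
    and mbar_min: "\<forall>m\<in>{0..<mbar}. b m \<noteq> m"
  shows "class_R (Wfun \<psi> \<phi> \<mu> r U f F b mbar)"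
proof -
  have "open (state_space \<alpha>)"
    using alpha by (intro open_state_space) auto
  moreover have "\<mu> C1_differentiable_on state_space \<alpha>"
    using mu_C1 mu'_lip
    by (intro C1_differentiable_onI_real[where f' = "deriv \<mu>"])
       (auto simp: DERIV_deriv_iff_real_differentiable intro: lipschitz_on_continuous_on)
  moreover have "continuous_on (state_space \<alpha>) \<sigma>"
    using sigma_C1 by (meson differentiable_imp_continuous_within continuous_at_imp_continuous_on)
  moreover have "continuous_on {0..} U"
    using U_d1 by (auto simp: continuous_on_eq_continuous_within intro: DERIV_continuous)
  moreover have "continuous_on {0..ybar} f"
    using f_lip by (auto intro: lipschitz_on_continuous_on)
  moreover have "\<And>x. 0 \<le> x \<Longrightarrow> deriv \<mu> x < r"
    using mu'_bound by force
  ultimately interpret W: stopping_problem \<alpha> \<mu> \<sigma> \<psi> \<phi> r f F ybar U b xbar mbar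
    by unfold_locales (assumption | rule assms[rule_format] | blast)+
  show ?thesis by (rule W.class_R_W)
qed

end
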